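(* Consider a position in the Strong Ramsey game $\mathcal{R}(K_{\aleph_0}^{(3)}, \hat{K}_{2,4}^{(3)})$ in which $P_2$ has claimed all edges of a copy of $\hat{K}_{2,3}^{(3)}$ with main vertices $x,y$ and center $c$, and suppose that (i) $P_1$ does not have a threat; (ii) $P_1$ has not claimed all edges of a copy of $\hat{K}_{2,3}^{(3)}$ whose center is $c$ and one of whose main vertices is $x$; (iii) $P_1$ has not claimed all edges of a copy of $\hat{K}_{2,3}^{(3)}$ whose center is $x$ and one of whose main vertices is $c$. If it is $P_2$'s turn, then $P_2$ has a strategy from this position guaranteeing that $P_1$ never claims all edges of a copy of $\hat{K}_{2,4}^{(3)}$ (a drawing strategy).
   Context: Strong Ramsey game $\mathcal{R}(B,G)$: players $P_1$, $P_2$ alternately claim unclaimed edges of the $k$-uniform hypergraph $B$, $P_1$ first; the first to claim all edges of a copy of the finite $k$-uniform hypergraph $G$ wins; if nobody does so in finitely many moves the game is a draw. $K_{\aleph_0}^{(3)}$ is the complete $3$-uniform hypergraph on a countably infinite vertex set. $\hat{K}_{2,l}$ ($l\ge3$) is $K_{2,l}$ plus the edge joining its two vertices of degree $l$. For a graph $H$, $H^{(3)}$ is the $3$-uniform hypergraph obtained by adding one fixed new vertex $c$ (the center) to every edge of $H$. Main vertices of $\hat{K}_{2,l}^{(3)}$: the two vertices of degree $l+1$ in $\hat K_{2,l}$ (degree at least 3); a copy of $\hat{K}_{2,3}^{(3)}$ "with main vertices $x,y$ and center $c$" is one whose center is $c$ and whose main vertices are $x,y$. $P_1$ has a threat if she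 has claimed all edges of a copy of $\hat{K}_{2,4}^{(3)}$ minus one edge $e$, where the edge of the board corresponding to $e$ is claimed by neither player. *)

theory Defs
  imports Main
begin

text \<open>Board: the complete 3-uniform hypergraph on the countably infinite vertex set nat.
  Its edges are the 3-element subsets of nat.\<close>
definition edge3 :: "nat set \<Rightarrow> bool" where
  "edge3 e \<longleftrightarrow> card e = 3"

text \<open>H^(3): add the fixed new vertex c to every edge of the graph H.\<close>
definition cone :: "'a set set \<Rightarrow> 'a \<Rightarrow> 'a set set" where
  "cone H c = (insert c) ` H"

text \<open>The graph hat K_{2,l}: main vertices 0 and 1 (joined by an edge), the l other
  vertices are 3, ..., l+2, each joined to both 0 and 1. Vertex 2 is kept free for the center.\<close>
definition Khat :: "nat \<Rightarrow> nat set set" where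
  "Khat l = {{0,1}} \<union> (\<lambda>i. {0,i}) ` {3..<l+3} \<union> (\<lambda>i. {1,i}) ` {3..<l+3}"

definition Khat3 :: "nat \<Rightarrow> nat set set" where
  "Khat3 l = cone (Khat l) 2"

definition copy_in :: "(nat \<Rightarrow> nat) \<Rightarrow> nat set set \<Rightarrow> nat set set \<Rightarrow> bool" where
  "copy_in f G X \<longleftrightarrow> inj_on f (\<Union>G) \<and> (image f) ` G \<subseteq> X"

definition has_copy :: "nat set set \<Rightarrow> nat set set \<Rightarrow> bool" where
  "has_copy X G \<longleftrightarrow> (\<exists>f. copy_in f G X)"

text \<open>P1 (owning the edge set A; B owned by P2) has a threat.\<close>
definition threat :: "nat set set \<Rightarrow> nat set set \<Rightarrow> bool" where
  "threat A B \<longleftrightarrow> (\<exists>f e. inj_on f (\<Union>(Khat3 4)) \<and> e \<in> (image f) ` Khat3 4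
      \<and> (image f) ` Khat3 4 - {e} \<subseteq> A \<and> e \<notin> A \<and> e \<notin> B)"

text \<open>Plays from a position (A,B) with P2 to move: m k is the edge claimed at the k-th move
  from that position; even k are P2's moves, odd k are P1's moves.\<close>
definition P1_set :: "nat set set \<Rightarrow> (nat \<Rightarrow> nat set) \<Rightarrow> nat \<Rightarrow> nat set set" where
  "P1_set A m k = A \<union> {m i | i. i < k \<and> odd i}"

definition P2_set :: "nat set set \<Rightarrow> (nat \<Rightarrow> nat set) \<Rightarrow> nat \<Rightarrow> nat set set" where
  "P2_set B m k = B \<union> {m i | i. i < k \<and> even i}"

definition legal :: "nat set set \<Rightarrow> nat set set \<Rightarrow> (nat \<Rightarrow> nat set) \<Rightarrow> nat \<Rightarrow> bool" where
  "legal A B m k \<longleftrightarrow> edge3 (m k) \<and> m k \<notin> A \<and> m k \<notin> B \<and> m k \<notin> m ` {..<k}"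

text \<open>sigma is a (history-dependent) strategy for P2 from position (A,B), P2 to move,
  guaranteeing that P1 never claims all edges of a copy of hat K_{2,4}^(3) while the game is
  running (the game stops as soon as P2 completes a copy first).\<close>
definition P2_drawing_strategy ::
  "nat set set \<Rightarrow> nat set set \<Rightarrow> (nat set list \<Rightarrow> nat set) \<Rightarrow> bool" where
  "P2_drawing_strategy A B \<sigma> \<longleftrightarrow>
    (\<forall>m. (\<forall>k. odd k \<longrightarrow> legal A B m k) \<and> (\<forall>k. even k \<longrightarrow> m k = \<sigma> (map m [0..<k])) \<longrightarrow>
       (\<forall>k. even k \<longrightarrow> legal A B m k) \<and>
       (\<forall>k. has_copy (P1_set A m k) (Khat3 4) \<longrightarrow>
          (\<exists>j\<le>k. has_copy (P2_set B m j) (Khat3 4) \<and> \<not> has_copy (P1_set A m j) (Khat3 4))))"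

end

theory Submission
  imports Defs
begin

text \<open>P2 plays forks: she claims {c, y, z} for a fresh vertex z. Together with her copy
  of hat K_{2,3}^(3) with main vertices x, y and centre c, the edge {c, x, z} would complete a copy
  of hat K_{2,4}^(3), so P1 must answer every fork with {c, x, z}, or P2 claims it next and wins.
  Hence P1's edges are A together with a book of edges {c, x, z}, z fresh, plus at most one
  further edge. A fresh vertex lies in at most two edges of such a set, while each of the main
  vertices and the centre of a copy of hat K_{2,4}^(3) lies in at least four of its edges. So a copy
  of hat K_{2,4}^(3) in P1's edges either avoids the fresh vertices, and is then a copy in A or a
  threat, or has exactly one fresh leaf z; in the latter case one of its edges through z is
  {c, x, z}, and removing z leaves a copy of hat K_{2,3}^(3) in A with centre c and main vertex x,
  or with centre x and main vertex c. Conditions (i)-(iii) rule out all of these.\<close>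

definition hat3 :: "'a \<Rightarrow> 'a \<Rightarrow> 'a \<Rightarrow> 'a set \<Rightarrow> 'a set set" where
  "hat3 u v w L = insert {u, v, w} ((\<lambda>l. {u, w, l}) ` L \<union> (\<lambda>l. {v, w, l}) ` L)"

definition hat_frame :: "'a \<Rightarrow> 'a \<Rightarrow> 'a \<Rightarrow> 'a set \<Rightarrow> nat \<Rightarrow> bool" where
  "hat_frame u v w L n \<longleftrightarrow> distinct [u, v, w] \<and> finite L \<and> card L = n \<and> u \<notin> L \<and> v \<notin> L \<and> w \<notin> L"

lemma hat3_commute: "hat3 v u w L = hat3 u v w L"
  unfolding hat3_def by (auto simp: insert_commute)

lemma hat_frame_commute: "hat_frame v u w L n = hat_frame u v w L n"
  unfolding hat_frame_def by auto

lemma hat3_insert: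
  "hat3 u v w (insert l L) = insert {u, w, l} (insert {v, w, l} (hat3 u v w L))"
  unfolding hat3_def by auto

lemma Union_hat3: "\<Union>(hat3 u v w L) = {u, v, w} \<union> L"
  unfolding hat3_def by auto

lemma Khat3_eq_hat3: "Khat3 n = hat3 0 1 2 {3..<n + 3}"
  unfolding Khat3_def cone_def Khat_def hat3_def by (auto simp: insert_commute)

lemma image_hat3: "(image f) ` hat3 u v w L = hat3 (f u) (f v) (f w) (f ` L)"
  unfolding hat3_def by (simp add: image_Un image_image)

lemma Union_Khat3: "\<Union>(Khat3 n) = {0..<n + 3}"
  unfolding Khat3_eq_hat3 Union_hat3 by auto

lemma hat_frame_image:
  assumes "inj_on f (\<Union>(Khat3 n))"
  shows "hat_frame (f 0) (f 1) (f 2) (f ` {3..<n + 3}) n"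
proof -
  have inj: "inj_on f {0..<n + 3}" using assms unfolding Union_Khat3 .
  then have "inj_on f {3..<n + 3}" by (rule inj_on_subset) auto
  then have "card (f ` {3..<n + 3}) = n" by (simp add: card_image)
  moreover have "f i \<notin> f ` {3..<n + 3}" if "i < 3" for i
    using inj that by (auto simp: inj_on_eq_iff)
  moreover have "distinct [f 0, f 1, f 2]"
    using inj by (auto simp: inj_on_eq_iff)
  ultimately show ?thesis unfolding hat_frame_def by auto
qed

lemma hat_frame_obtain_embedding:
  assumes "hat_frame u v w L n"
  obtains f where "inj_on f (\<Union>(Khat3 n))" "(image f) ` Khat3 n = hat3 u v w L"
    "f 0 = u" "f 1 = v" "f 2 = w"
proof -
  from assms obtain h where h: "bij_betw h {0..<n} L"
    unfolding hat_frame_def using ex_bij_betw_nat_finite by blast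
  define f where "f i = (if i = 0 then u else if i = 1 then v else if i = 2 then w else h (i - 3))"
    for i
  have "f ` {3..<n + 3} = h ` {0..<n}"
  proof -
    have "f ` {3..<n + 3} = h ` (\<lambda>i. i - 3) ` {3..<n + 3}"
      unfolding f_def by (simp add: image_image)
    then show ?thesis by (simp add: image_minus_const_atLeastLessThan_nat)
  qed
  then have leaves: "f ` {3..<n + 3} = L" using h by (simp add: bij_betw_def)
  have "inj_on f {3..<n + 3}"
  proof (rule inj_onI)
    fix i j assume "i \<in> {3..<n + 3}" "j \<in> {3..<n + 3}" "f i = f j"
    then have "h (i - 3) = h (j - 3)" "i - 3 \<in> {0..<n}" "j - 3 \<in> {0..<n}"
      unfolding f_def by auto
    then show "i = j" using h \<open>i \<in> _\<close> \<open>j \<in> _\<close> unfolding bij_betw_def inj_on_def by fastforce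
  qed
  moreover have "{0..<n + 3} = {0, 1, 2} \<union> {3..<n + 3}" by auto
  ultimately have "inj_on f (\<Union>(Khat3 n))"
    using assms leaves unfolding Union_Khat3 hat_frame_def by (auto simp: inj_on_Un f_def)
  moreover have "(image f) ` Khat3 n = hat3 u v w L"
    unfolding Khat3_eq_hat3 image_hat3 leaves by (simp add: f_def)
  ultimately show thesis using that by (simp add: f_def)
qed

lemma image_Khat3: "(image f) ` Khat3 n = hat3 (f 0) (f 1) (f 2) (f ` {3..<n + 3})"
  unfolding Khat3_eq_hat3 image_hat3 ..

lemma copy_in_Khat3D:
  assumes "copy_in f (Khat3 n) X"
  shows "hat_frame (f 0) (f 1) (f 2) (f ` {3..<n + 3}) n"
    and "hat3 (f 0) (f 1) (f 2) (f ` {3..<n + 3}) \<subseteq> X"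
  using assms hat_frame_image unfolding copy_in_def image_Khat3 by auto

lemma hat3_copy_in:
  assumes "hat_frame u v w L n" "hat3 u v w L \<subseteq> X"
  shows "\<exists>f. copy_in f (Khat3 n) X \<and> f 0 = u \<and> f 1 = v \<and> f 2 = w"
proof -
  obtain f where f: "inj_on f (\<Union>(Khat3 n))" "(image f) ` Khat3 n = hat3 u v w L"
    "f 0 = u" "f 1 = v" "f 2 = w"
    using hat_frame_obtain_embedding[OF assms(1)] .
  then have "copy_in f (Khat3 n) X" using assms(2) unfolding copy_in_def by simp
  with f(3-5) show ?thesis by blast
qed

lemma has_copy_Khat3_iff:
  "has_copy X (Khat3 n) \<longleftrightarrow> (\<exists>u v w L. hat_frame u v w L n \<and> hat3 u v w L \<subseteq> X)"
  unfolding has_copy_def using copy_in_Khat3D hat3_copy_in by metis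

lemma threatI:
  assumes "hat_frame u v w L 4" "e \<in> hat3 u v w L" "hat3 u v w L - {e} \<subseteq> A" "e \<notin> A" "e \<notin> B"
  shows "threat A B"
proof -
  obtain f where f: "inj_on f (\<Union>(Khat3 4))" "(image f) ` Khat3 4 = hat3 u v w L"
    using hat_frame_obtain_embedding[OF assms(1)] .
  then have "e \<in> (image f) ` Khat3 4" "(image f) ` Khat3 4 - {e} \<subseteq> A"
    using assms(2,3) by simp_all
  then show ?thesis using f(1) assms(4,5) unfolding threat_def by blast
qed

lemma has_copy_mono: "has_copy X G \<Longrightarrow> X \<subseteq> Y \<Longrightarrow> has_copy Y G"
  unfolding has_copy_def copy_in_def by (meson subset_trans)

definition book :: "'a \<Rightarrow> 'a \<Rightarrow> 'a set \<Rightarrow> 'a set set" where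
  "book c x Z = (\<lambda>z. {c, x, z}) ` Z"

lemma edge_through_page_vertex:
  assumes "s \<in> insert e (A \<union> book c x Z)" "z \<in> Z" "z \<in> s"
    and "Z \<inter> \<Union>A = {}" "c \<notin> Z" "x \<notin> Z"
  shows "s = e \<or> s = {c, x, z}"
  using assms unfolding book_def by auto

lemma edge_avoiding_pages:
  "s \<in> insert e (A \<union> book c x Z) \<Longrightarrow> s \<noteq> e \<Longrightarrow> s \<inter> Z = {} \<Longrightarrow> s \<in> A"
  unfolding book_def by auto

lemma fan_not_subset_doubleton:
  assumes "finite L" "3 \<le> card L" "a \<notin> L" "b \<notin> L"
  shows "\<not> (\<lambda>l. {a, b, l}) ` L \<subseteq> {s, t}"
proof
  assume sub: "(\<lambda>l. {a, b, l}) ` L \<subseteq> {s, t}"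
  have "inj_on (\<lambda>l. {a, b, l}) L"
    using assms(3,4) by (auto intro!: inj_onI simp: insert_eq_iff)
  then have "card ((\<lambda>l. {a, b, l}) ` L) = card L" by (rule card_image)
  moreover have "card ((\<lambda>l. {a, b, l}) ` L) \<le> card {s, t}" using sub by (intro card_mono) simp_all
  moreover have "card {s, t} \<le> 2" by (simp add: card_insert_le_m1)
  ultimately show False using assms(2) by linarith
qed

(* A vertex of Z lies in at most two edges of the extended set, namely e and {c, x, z}. *)
lemma hat3_hubs_outside_pages:
  assumes frame: "hat_frame u v w L n" "3 \<le> n"
    and sub: "hat3 u v w L \<subseteq> insert e (A \<union> book c x Z)"
    and Z: "Z \<inter> \<Union>A = {}" "c \<notin> Z" "x \<notin> Z"
  shows "u \<notin> Z" "v \<notin> Z" "w \<notin> Z"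
proof -
  have fr: "finite L" "3 \<le> card L" "u \<notin> L" "v \<notin> L" "w \<notin> L"
    using frame unfolding hat_frame_def by auto
  have hub: "p \<notin> Z"
    if "p \<in> {a, b}" "(\<lambda>l. {a, b, l}) ` L \<subseteq> hat3 u v w L" "a \<notin> L" "b \<notin> L" for a b p
  proof
    assume "p \<in> Z"
    then have "(\<lambda>l. {a, b, l}) ` L \<subseteq> {e, {c, x, p}}"
      using edge_through_page_vertex[OF subsetD[OF sub] _ _ Z] that(1,2) by blast
    then show False using fan_not_subset_doubleton[OF fr(1,2) that(3,4)] by blast
  qed
  have fans: "(\<lambda>l. {u, w, l}) ` L \<subseteq> hat3 u v w L" "(\<lambda>l. {v, w, l}) ` L \<subseteq> hat3 u v w L"
    unfolding hat3_def by auto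
  show "u \<notin> Z" "v \<notin> Z" "w \<notin> Z"
    using hub[OF _ fans(1)] hub[OF _ fans(2)] fr(3-5) by simp_all
qed

lemma hat3_leaf_in_pages:
  assumes frame: "hat_frame u v w L n"
    and sub: "hat3 u v w L \<subseteq> insert e (A \<union> book c x Z)"
    and Z: "Z \<inter> \<Union>A = {}" "c \<notin> Z" "x \<notin> Z"
    and l: "l \<in> L" "l \<in> Z"
  shows "e \<in> {{u, w, l}, {v, w, l}}" "{u, w} = {c, x} \<or> {v, w} = {c, x}"
proof -
  have fr: "distinct [u, v, w]" "u \<notin> L" "v \<notin> L" "w \<notin> L"
    using frame unfolding hat_frame_def by auto
  have "{u, w, l} \<noteq> {v, w, l}" using fr l(1) by (auto simp: insert_eq_iff)
  moreover have "{u, w, l} = e \<or> {u, w, l} = {c, x, l}" "{v, w, l} = e \<or> {v, w, l} = {c, x, l}"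
    by (rule edge_through_page_vertex[OF subsetD[OF sub] l(2) _ Z]; use l(1) in \<open>auto simp: hat3_def\<close>)+
  ultimately consider "e = {u, w, l}" "{v, w, l} = {c, x, l}" | "e = {v, w, l}" "{u, w, l} = {c, x, l}"
    by metis
  moreover have "{a, b} = {c, x}" if "{a, b, l} = {c, x, l}" "a \<noteq> l" "b \<noteq> l" for a b
  proof -
    have "{a, b} = {a, b, l} - {l}" "{c, x} = {c, x, l} - {l}"
      using that(2,3) l(2) Z(2,3) by auto
    then show ?thesis using that(1) by simp
  qed
  ultimately show "e \<in> {{u, w, l}, {v, w, l}}" "{u, w} = {c, x} \<or> {v, w} = {c, x}"
    using fr l(1) by (cases; metis insertI1 insertI2)+
qed

lemma hat3_in_book_extension_cases:
  assumes frame: "hat_frame u v w L n" "3 \<le> n"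
    and sub: "hat3 u v w L \<subseteq> insert e (A \<union> book c x Z)"
    and Z: "Z \<inter> \<Union>A = {}" "c \<notin> Z" "x \<notin> Z"
  obtains "hat3 u v w L \<subseteq> A"
    | "e \<in> hat3 u v w L" "hat3 u v w L - {e} \<subseteq> A"
    | l where "l \<in> L" "hat3 u v w (L - {l}) \<subseteq> A" "{u, w} = {c, x} \<or> {v, w} = {c, x}"
proof -
  have fr: "distinct [u, v, w]" "u \<notin> L" "v \<notin> L" "w \<notin> L"
    using frame unfolding hat_frame_def by auto
  have in_A: "s \<in> A" if "s \<in> hat3 u v w L" "s \<noteq> e" "s \<inter> Z = {}" for s
    using edge_avoiding_pages[OF subsetD[OF sub that(1)] that(2,3)] .
  note hubs = hat3_hubs_outside_pages[OF frame sub Z]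
  note leaf = hat3_leaf_in_pages[OF frame(1) sub Z]
  show thesis
  proof (cases "L \<inter> Z = {}")
    case True
    then have "\<Union>(hat3 u v w L) \<inter> Z = {}" using hubs by (auto simp: Union_hat3)
    then have "s \<in> A" if "s \<in> hat3 u v w L" "s \<noteq> e" for s
      using in_A[OF that] that(1) by blast
    then show thesis using that(1,2) by blast
  next
    case False
    then obtain l where l: "l \<in> L" "l \<in> Z" by blast
    have "l' = l" if "l' \<in> L" "l' \<in> Z" for l'
    proof -
      have "l' \<in> e" using leaf(1)[OF that] by auto
      then show ?thesis using leaf(1)[OF l] fr that(1) by auto
    qed
    then have "\<Union>(hat3 u v w (L - {l})) \<inter> Z = {}" using hubs by (auto simp: Union_hat3)
    moreover have "l \<notin> \<Union>(hat3 u v w (L - {l}))" using fr l(1) by (auto simp: Union_hat3)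
    moreover have "l \<in> e" using leaf(1)[OF l] by auto
    moreover have "hat3 u v w (L - {l}) \<subseteq> hat3 u v w L" unfolding hat3_def by auto
    ultimately have "hat3 u v w (L - {l}) \<subseteq> A" using in_A by blast
    then show thesis using that(3) l(1) leaf(2)[OF l] by blast
  qed
qed

definition book_safe :: "nat set set \<Rightarrow> nat set set \<Rightarrow> nat \<Rightarrow> nat \<Rightarrow> bool" where
  "book_safe A B c x \<longleftrightarrow> (\<forall>Z e. Z \<inter> \<Union>A = {} \<longrightarrow> c \<notin> Z \<longrightarrow> x \<notin> Z \<longrightarrow> e \<notin> A \<longrightarrow> e \<notin> B \<longrightarrow>
     \<not> has_copy (insert e (A \<union> book c x Z)) (Khat3 4))"

lemma book_safeI:
  assumes no_copy: "\<not> has_copy A (Khat3 4)" and no_threat: "\<not> threat A B"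
    and no_copy_c: "\<not> (\<exists>f. copy_in f (Khat3 3) A \<and> f 2 = c \<and> x \<in> {f 0, f 1})"
    and no_copy_x: "\<not> (\<exists>f. copy_in f (Khat3 3) A \<and> f 2 = x \<and> c \<in> {f 0, f 1})"
  shows "book_safe A B c x"
  unfolding book_safe_def
proof (intro allI impI notI)
  fix Z e
  assume Z: "Z \<inter> \<Union>A = {}" "c \<notin> Z" "x \<notin> Z" and e: "e \<notin> A" "e \<notin> B"
    and "has_copy (insert e (A \<union> book c x Z)) (Khat3 4)"
  then obtain u v w L where frame: "hat_frame u v w L 4"
    and sub: "hat3 u v w L \<subseteq> insert e (A \<union> book c x Z)"
    unfolding has_copy_Khat3_iff by blast
  show False
  proof (rule hat3_in_book_extension_cases[OF frame _ sub Z])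
    assume "hat3 u v w L \<subseteq> A"
    then show False using no_copy frame unfolding has_copy_Khat3_iff by blast
  next
    assume "e \<in> hat3 u v w L" "hat3 u v w L - {e} \<subseteq> A"
    then show False using threatI[OF frame _ _ e] no_threat by blast
  next
    fix l assume l: "l \<in> L" "hat3 u v w (L - {l}) \<subseteq> A"
      and main: "{u, w} = {c, x} \<or> {v, w} = {c, x}"
    have "hat_frame u v w (L - {l}) 3" using frame l(1) unfolding hat_frame_def by auto
    then obtain f where "copy_in f (Khat3 3) A" "f 0 = u" "f 1 = v" "f 2 = w"
      using hat3_copy_in[OF _ l(2)] by blast
    moreover have "u \<noteq> w" "v \<noteq> w" using frame unfolding hat_frame_def by auto
    ultimately show False using no_copy_c no_copy_x main by (auto simp: doubleton_eq_iff)
  qed simp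
qed

lemma edge3_finite: "edge3 e \<Longrightarrow> finite e"
  unfolding edge3_def by (simp add: card_ge_0_finite)

definition fresh_vertex :: "nat set \<Rightarrow> nat set list \<Rightarrow> nat" where
  "fresh_vertex V h = Suc (Max (V \<union> \<Union>(set h)))"

definition available :: "nat set set \<Rightarrow> nat set set \<Rightarrow> nat set list \<Rightarrow> nat set \<Rightarrow> bool" where
  "available A B h s \<longleftrightarrow> edge3 s \<and> s \<notin> A \<and> s \<notin> B \<and> s \<notin> set h"

lemma legal_iff_available: "legal A B m k \<longleftrightarrow> available A B (map m [0..<k]) (m k)"
  unfolding legal_def available_def by auto

(* If P2's move two turns ago was the fork {c, y, z}, then s = {c, x, z}, which completes P2's
   copy of hat K_{2,4}^(3) unless P1 has taken it. The availability test keeps the strategy legal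
   after any history. *)
definition book_strategy ::
  "nat set set \<Rightarrow> nat set set \<Rightarrow> nat \<Rightarrow> nat \<Rightarrow> nat \<Rightarrow> nat set list \<Rightarrow> nat set" where
  "book_strategy A B c x y h =
    (let s = insert x (h ! (length h - 2) - {y}) in
     if 2 \<le> length h \<and> available A B h s then s
     else {c, y, fresh_vertex (\<Union>(A \<union> B) \<union> {c, x, y}) h})"

lemma book_strategy_cases:
  "available A B h (book_strategy A B c x y h) \<or>
   book_strategy A B c x y h = {c, y, fresh_vertex (\<Union>(A \<union> B) \<union> {c, x, y}) h}"
  unfolding book_strategy_def Let_def by simp

locale book_play =
  fixes A B :: "nat set set" and c x y :: nat and L :: "nat set" and m :: "nat \<Rightarrow> nat set"
  assumes finite_A: "finite A" and finite_B: "finite B" and edges: "\<forall>e\<in>A \<union> B. edge3 e"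
    and B_hat: "hat_frame x y c L 3" "hat3 x y c L \<subseteq> B"
    and P1_legal: "odd k \<Longrightarrow> legal A B m k"
    and P2_moves: "even k \<Longrightarrow> m k = book_strategy A B c x y (map m [0..<k])"
begin

definition fork :: "nat \<Rightarrow> nat" where
  "fork k = fresh_vertex (\<Union>(A \<union> B) \<union> {c, x, y}) (map m [0..<k])"

definition answered :: "nat \<Rightarrow> bool" where
  "answered k \<longleftrightarrow> m k = {c, x, fork (k - 1)}"

lemma distinct_cxy: "c \<noteq> x" "c \<noteq> y" "x \<noteq> y"
  using B_hat(1) unfolding hat_frame_def by auto

lemma finite_move: "finite (m k)"
proof (cases "even k")
  case True
  then show ?thesis using P2_moves[OF True] book_strategy_cases
    unfolding available_def by (metis edge3_finite finite.emptyI finite.insertI)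
next
  case False
  then show ?thesis using P1_legal[of k] by (simp add: legal_def edge3_finite)
qed

lemma fork_fresh: "fork k \<notin> \<Union>A" "fork k \<notin> \<Union>B" "fork k \<notin> {c, x, y}" "i < k \<Longrightarrow> fork k \<notin> m i"
proof -
  let ?V = "\<Union>(A \<union> B) \<union> {c, x, y} \<union> \<Union>(set (map m [0..<k]))"
  have "finite ?V" using finite_A finite_B edges finite_move by (auto simp: edge3_finite)
  then have "Suc (Max ?V) \<notin> ?V" by (metis Max_ge Suc_n_not_le_n)
  then have "fork k \<notin> ?V" unfolding fork_def fresh_vertex_def .
  then show "fork k \<notin> \<Union>A" "fork k \<notin> \<Union>B" "fork k \<notin> {c, x, y}" "i < k \<Longrightarrow> fork k \<notin> m i"
    by auto
qed

lemma fork_edge_new: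
  assumes "a \<in> {x, y}"
  shows "edge3 {c, a, fork k}" "{c, a, fork k} \<notin> A" "{c, a, fork k} \<notin> B"
  using assms fork_fresh(1-3)[of k] distinct_cxy unfolding edge3_def by auto

lemma fork_edge_available: "available A B (map m [0..<k]) {c, y, fork k}"
proof -
  have "{c, y, fork k} \<notin> set (map m [0..<k])"
  proof
    assume "{c, y, fork k} \<in> set (map m [0..<k])"
    then obtain i where "i < k" "m i = {c, y, fork k}" by auto
    then show False using fork_fresh(4)[of i k] by auto
  qed
  then show ?thesis using fork_edge_new[of y k] unfolding available_def by simp
qed

lemma P2_move:
  assumes "even k"
  shows "m k = (let s = insert x (m (k - 2) - {y}) in
    if 2 \<le> k \<and> available A B (map m [0..<k]) s then s else {c, y, fork k})"
  using P2_moves[OF assms] unfolding book_strategy_def fork_def by (cases "2 \<le> k") simp_all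

lemma legal_move: "legal A B m k"
proof (cases "even k")
  case True
  then show ?thesis
    using P2_move[OF True] fork_edge_available unfolding legal_iff_available Let_def
    by (metis (full_types))
next
  case False
  then show ?thesis by (simp add: P1_legal)
qed

lemma P2_forks:
  assumes "even k" "\<And>i. i < k \<Longrightarrow> odd i \<Longrightarrow> answered i"
  shows "m k = {c, y, fork k}"
  using assms
proof (induction k rule: less_induct)
  case (less k)
  show ?case
  proof (cases "2 \<le> k")
    case False
    then show ?thesis using P2_move[OF less.prems(1)] by simp
  next
    case True
    have "m (k - 2) = {c, y, fork (k - 2)}"
      using less.IH[of "k - 2"] less.prems True by simp
    then have "insert x (m (k - 2) - {y}) = {c, x, fork (k - 2)}"
      using fork_fresh(3)[of "k - 2"] distinct_cxy by auto
    also have "\<dots> = m (k - 1)"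
    proof -
      have "odd (k - 1)" "k - 1 < k" "k - 1 - 1 = k - 2" using True less.prems(1) by presburger+
      then show ?thesis using less.prems(2) unfolding answered_def by simp
    qed
    finally have "\<not> available A B (map m [0..<k]) (insert x (m (k - 2) - {y}))"
      using True unfolding available_def by auto
    then show ?thesis using P2_move[OF less.prems(1)] by (simp add: Let_def)
  qed
qed

lemma P2_closes_unanswered_fork:
  assumes "odd k" "\<And>i. i < k \<Longrightarrow> odd i \<Longrightarrow> answered i" "\<not> answered k"
  shows "m (Suc k) = {c, x, fork (k - 1)}"
proof -
  define p where "p = k - 1"
  have p: "even p" "Suc p = k" using assms(1) unfolding p_def by presburger+
  have mp: "m p = {c, y, fork p}"
  proof (rule P2_forks[OF p(1)])
    fix i assume "i < p" "odd i"
    then show "answered i" using assms(2) p(2) by simp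
  qed
  have "x \<notin> m p" using mp fork_fresh(3)[of p] distinct_cxy by auto
  have "{c, y, fork p} - {y} = {c, fork p}" using fork_fresh(3)[of p] distinct_cxy by auto
  then have "insert x (m (Suc k - 2) - {y}) = {c, x, fork p}"
    using mp p(2)[symmetric] by (simp add: insert_commute)
  moreover have "available A B (map m [0..<Suc k]) {c, x, fork p}"
  proof -
    have other_moves: "m i \<noteq> {c, x, fork p}" if i: "i < Suc k" for i
    proof -
      consider "i < p" | "i = p" | "i = k" using i p(2) by linarith
      then show ?thesis
      proof cases
        case 1
        then have "fork p \<notin> m i" by (rule fork_fresh(4))
        then show ?thesis by blast
      next
        case 2
        then show ?thesis using \<open>x \<notin> m p\<close> by blast
      next
        case 3
        then show ?thesis using assms(3) unfolding answered_def p_def by simp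
      qed
    qed
    then have "{c, x, fork p} \<notin> set (map m [0..<Suc k])" by (auto simp: eq_commute[of "{c, x, fork p}"])
    then show ?thesis using fork_edge_new[of x p] unfolding available_def by simp
  qed
  moreover have "even (Suc k)" "2 \<le> Suc k" using assms(1) p(2) by auto
  ultimately show ?thesis using P2_move[of "Suc k"] unfolding p_def by (simp add: Let_def)
qed

lemma P2_copy_after_unanswered_fork:
  assumes "odd k" "\<And>i. i < k \<Longrightarrow> odd i \<Longrightarrow> answered i" "\<not> answered k"
  shows "has_copy (P2_set B m (Suc (Suc k))) (Khat3 4)"
proof -
  define p where "p = k - 1"
  have p: "even p" "Suc p = k" using assms(1) unfolding p_def by presburger+
  have "L \<subseteq> \<Union>B" using B_hat(2) Union_hat3[of x y c L] by (metis Sup_subset_mono Un_subset_iff)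
  then have "fork p \<notin> L" using fork_fresh(2)[of p] by blast
  then have "hat_frame x y c (insert (fork p) L) 4"
    using B_hat(1) fork_fresh(3)[of p] unfolding hat_frame_def by auto
  moreover have "hat3 x y c (insert (fork p) L) \<subseteq> P2_set B m (Suc (Suc k))"
  proof -
    have "m (Suc k) = {x, c, fork p}" using P2_closes_unanswered_fork[OF assms] unfolding p_def by auto
    moreover have "m p = {y, c, fork p}" using P2_forks[OF p(1)] assms(2) p(2) by auto
    ultimately have "{x, c, fork p} \<in> P2_set B m (Suc (Suc k))" "{y, c, fork p} \<in> P2_set B m (Suc (Suc k))"
      unfolding P2_set_def using assms(1) p by (metis (mono_tags, lifting) UnI2 even_Suc lessI less_SucI mem_Collect_eq)+
    moreover have "hat3 x y c L \<subseteq> P2_set B m (Suc (Suc k))" using B_hat(2) unfolding P2_set_def by auto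
    ultimately show ?thesis unfolding hat3_insert by simp
  qed
  ultimately show ?thesis unfolding has_copy_Khat3_iff by blast
qed

lemma P1_set_subset_book:
  assumes "\<And>i. i < k \<Longrightarrow> odd i \<Longrightarrow> m i \<noteq> e \<Longrightarrow> answered i"
  shows "P1_set A m k \<subseteq> insert e (A \<union> book c x (range fork))"
  using assms unfolding P1_set_def book_def answered_def by blast

lemma P1_no_copy_within_book:
  assumes "book_safe A B c x" "odd i"
    and "P1_set A m j \<subseteq> insert (m i) (A \<union> book c x (range fork))"
  shows "\<not> has_copy (P1_set A m j) (Khat3 4)"
proof -
  have "range fork \<inter> \<Union>A = {}" using fork_fresh(1) by blast
  moreover have "c \<notin> range fork" "x \<notin> range fork" by (metis fork_fresh(3) insertCI rangeE)+
  moreover have "m i \<notin> A" "m i \<notin> B" using P1_legal[OF assms(2)] unfolding legal_def by auto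
  ultimately have "\<not> has_copy (insert (m i) (A \<union> book c x (range fork))) (Khat3 4)"
    using assms(1) unfolding book_safe_def by blast
  then show ?thesis using has_copy_mono assms(3) by meson
qed

lemma P1_copy_preceded_by_P2_copy:
  assumes safe: "book_safe A B c x" and P1_copy: "has_copy (P1_set A m k) (Khat3 4)"
  shows "\<exists>j\<le>k. has_copy (P2_set B m j) (Khat3 4) \<and> \<not> has_copy (P1_set A m j) (Khat3 4)"
proof -
  note no_P1_copy = P1_no_copy_within_book[OF safe]
  have "\<exists>i. odd i \<and> \<not> answered i"
  proof (rule ccontr)
    assume "\<nexists>i. odd i \<and> \<not> answered i"
    then have "P1_set A m k \<subseteq> insert (m 1) (A \<union> book c x (range fork))"
      by (intro P1_set_subset_book) blast
    then show False using no_P1_copy[of 1 k] P1_copy by simp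
  qed
  then obtain k0 where k0: "odd k0" "\<not> answered k0" "\<And>i. i < k0 \<Longrightarrow> odd i \<Longrightarrow> answered i"
    using exists_least_iff[of "\<lambda>i. odd i \<and> \<not> answered i"] by blast
  define j where "j = Suc (Suc k0)"
  have "has_copy (P2_set B m j) (Khat3 4)" unfolding j_def using P2_copy_after_unanswered_fork[OF k0(1) k0(3) k0(2)] .
  moreover have "\<not> has_copy (P1_set A m j) (Khat3 4)"
  proof (rule no_P1_copy[OF k0(1)], rule P1_set_subset_book)
    fix i assume "i < j" "odd i" "m i \<noteq> m k0"
    then have "i < k0" using k0(1) unfolding j_def by (metis less_SucE even_Suc)
    then show "answered i" using k0(3) \<open>odd i\<close> by blast
  qed
  moreover have "j \<le> k"
  proof (rule ccontr)
    assume "\<not> j \<le> k"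
    then have "P1_set A m k \<subseteq> P1_set A m j" unfolding P1_set_def by auto
    then show False using P1_copy \<open>\<not> has_copy (P1_set A m j) (Khat3 4)\<close> has_copy_mono by blast
  qed
  ultimately show ?thesis by blast
qed

end

lemma book_strategy_draws:
  assumes "finite A" "finite B" "\<forall>e\<in>A \<union> B. edge3 e" "hat_frame x y c L 3" "hat3 x y c L \<subseteq> B"
    and safe: "book_safe A B c x"
  shows "P2_drawing_strategy A B (book_strategy A B c x y)"
  unfolding P2_drawing_strategy_def
proof (intro allI impI)
  fix m
  assume "(\<forall>k. odd k \<longrightarrow> legal A B m k) \<and>
    (\<forall>k. even k \<longrightarrow> m k = book_strategy A B c x y (map m [0..<k]))"
  then interpret book_play A B c x y L m
    using assms(1-5) by unfold_locales auto
  show "(\<forall>k. even k \<longrightarrow> legal A B m k) \<and>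
    (\<forall>k. has_copy (P1_set A m k) (Khat3 4) \<longrightarrow>
      (\<exists>j\<le>k. has_copy (P2_set B m j) (Khat3 4) \<and> \<not> has_copy (P1_set A m j) (Khat3 4)))"
    using legal_move P1_copy_preceded_by_P2_copy[OF safe] by blast
qed

theorem lemma3p2:
  fixes A B :: "nat set set" and x y c :: nat
  assumes pos: "finite A" "finite B" "A \<inter> B = {}" "\<forall>e\<in>A \<union> B. edge3 e"
    and turn: "card A = card B + 1"
    and running: "\<not> has_copy A (Khat3 4)" "\<not> has_copy B (Khat3 4)"
    and P2copy: "\<exists>f. copy_in f (Khat3 3) B \<and> f 2 = c \<and> {f 0, f 1} = {x, y}"
    and i: "\<not> threat A B"
    and ii: "\<not> (\<exists>f. copy_in f (Khat3 3) A \<and> f 2 = c \<and> x \<in> {f 0, f 1})"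
    and iii: "\<not> (\<exists>f. copy_in f (Khat3 3) A \<and> f 2 = x \<and> c \<in> {f 0, f 1})"
  shows "\<exists>\<sigma>. P2_drawing_strategy A B \<sigma>"
proof -
  obtain f where f: "copy_in f (Khat3 3) B" "f 2 = c" "{f 0, f 1} = {x, y}"
    using P2copy by blast
  define L where "L = f ` {3..<3 + 3}"
  have "hat_frame (f 0) (f 1) c L 3" "hat3 (f 0) (f 1) c L \<subseteq> B"
    using copy_in_Khat3D[OF f(1)] f(2) unfolding L_def by simp_all
  then have B_hat: "hat_frame x y c L 3" "hat3 x y c L \<subseteq> B"
    using f(3) by (auto simp: doubleton_eq_iff hat3_commute hat_frame_commute)
  have "P2_drawing_strategy A B (book_strategy A B c x y)"
    using book_strategy_draws[OF pos(1,2,4) B_hat book_safeI[OF running(1) i ii iii]] .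
  then show ?thesis by blast
qed

end
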